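(* Let $\mathfrak S$ be a commutative semiring and $\sigma_{\mathfrak S}$ a set of ideals of $\mathfrak S$ that contains the zero ideal $\{0\}$. Then $\sigma_{\mathfrak S}$, endowed with the ideal topology, is connected.
   Context: A semiring $(\mathfrak S,+,0,\cdot,1)$ has $(\mathfrak S,+,0)$ a commutative monoid, $(\mathfrak S,\cdot,1)$ a monoid, $0r=r0=0$, and two-sided distributivity; all semirings are commutative. An ideal is a nonempty proper subset closed under addition and under multiplication by elements of $\mathfrak S$. For an ideal $\mathfrak a$, $\mathfrak a^{\uparrow}=\{\mathfrak x\in\sigma_{\mathfrak S}\mid\mathfrak a\subseteq\mathfrak x\}$; the ideal topology on $\sigma_{\mathfrak S}$ has these sets ($\mathfrak a$ any ideal) as a subbasis of closed sets. *)

theory Defs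
  imports "HOL-Analysis.Analysis"
begin

definition semiring_ideal :: "'a::comm_semiring_1 set \<Rightarrow> bool" where
  "semiring_ideal I \<longleftrightarrow> I \<noteq> {} \<and> I \<noteq> UNIV \<and>
     (\<forall>x\<in>I. \<forall>y\<in>I. x + y \<in> I) \<and> (\<forall>r x. x \<in> I \<longrightarrow> r * x \<in> I)"

definition ideal_up :: "'a set set \<Rightarrow> 'a set \<Rightarrow> 'a set set" where
  "ideal_up \<sigma> a = {x \<in> \<sigma>. a \<subseteq> x}"

text \<open>The ideal topology on sigma: the sets ideal_up sigma a (a any ideal) form a
subbasis of closed sets; equivalently their complements in sigma form a subbasis of
open sets. sigma itself is added so that the carrier of the topology is sigma.\<close>
definition ideal_topology :: "'a::comm_semiring_1 set set \<Rightarrow> 'a set topology" where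
  "ideal_topology \<sigma> = topology_generated_by
     (insert \<sigma> ((\<lambda>a. \<sigma> - ideal_up \<sigma> a) ` {a. semiring_ideal a}))"

end

theory Submission
  imports Defs
begin

text \<open>Every ideal contains 0, so {0} lies below every member of sigma. Hence if some
member of sigma does not contain an ideal a, neither does {0}: the zero ideal lies in every
nonempty subbasic open set, and therefore in every nonempty open set. Two disjoint nonempty
open sets would both have to contain it.\<close>

lemma connected_space_if_nonempty_openin_contain_point:
  assumes "\<And>U. openin X U \<Longrightarrow> U \<noteq> {} \<Longrightarrow> p \<in> U"
  shows "connected_space X"
  unfolding connected_space_def using assms by blast

lemma generate_topology_on_nonempty_contains_point:
  assumes "generate_topology_on S U" "U \<noteq> {}"
    and "\<And>B. B \<in> S \<Longrightarrow> B \<noteq> {} \<Longrightarrow> p \<in> B"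
  shows "p \<in> U"
  using assms by (induction rule: generate_topology_on.induct) auto

lemma zero_in_semiring_ideal: "semiring_ideal (a::'a::comm_semiring_1 set) \<Longrightarrow> 0 \<in> a"
  unfolding semiring_ideal_def by (metis ex_in_conv mult_zero_left)

lemma zero_ideal_notin_ideal_up:
  fixes \<sigma> :: "'a::comm_semiring_1 set set"
  assumes ideals: "\<forall>I\<in>\<sigma>. semiring_ideal I" and "{0} \<in> \<sigma>"
    and "semiring_ideal a" and "x \<in> \<sigma> - ideal_up \<sigma> a"
  shows "{0} \<in> \<sigma> - ideal_up \<sigma> a"
proof -
  have "\<not> a \<subseteq> x" "semiring_ideal x"
    using assms(4) ideals by (auto simp: ideal_up_def)
  then have "\<not> a \<subseteq> {0}"
    using zero_in_semiring_ideal by blast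
  then show ?thesis
    using \<open>{0} \<in> \<sigma>\<close> by (simp add: ideal_up_def)
qed

lemma zero_ideal_in_nonempty_openin_ideal_topology:
  fixes \<sigma> :: "'a::comm_semiring_1 set set"
  assumes "\<forall>I\<in>\<sigma>. semiring_ideal I" "{0} \<in> \<sigma>"
    and "openin (ideal_topology \<sigma>) U" "U \<noteq> {}"
  shows "{0} \<in> U"
  using assms(3,4) unfolding ideal_topology_def openin_topology_generated_by_iff
  by (rule generate_topology_on_nonempty_contains_point)
    (use assms(1,2) zero_ideal_notin_ideal_up in auto)

theorem theorem3p13:
  fixes \<sigma> :: "'a::comm_semiring_1 set set"
  assumes "\<forall>I\<in>\<sigma>. semiring_ideal I"
    and "{0} \<in> \<sigma>"
  shows "connected_space (ideal_topology \<sigma>)"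
  using zero_ideal_in_nonempty_openin_ideal_topology[OF assms]
  by (rule connected_space_if_nonempty_openin_contain_point)

end
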